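(* Let $X, Y \subset \mathbb{Z}^n$ be finite nonempty sets, let $\kappa$ be an adjacency relation on $\mathbb{Z}^n$ (so that $(X,\kappa)$ and $(Y,\kappa)$ are digital images), and let $d$ be a metric on $\mathbb{Z}^n$. Then $H_d(X,Y) \le \delta_d(X,Y)$.
   Context: A digital image is a pair $(X,\kappa)$ with $X\subset\mathbb{Z}^n$ and $\kappa$ an adjacency (a symmetric irreflexive relation) on its points. A subset is $\kappa$-connected if any two of its points are joined by a finite sequence of points of the subset, consecutive ones $\kappa$-adjacent. A function $f:(X,\kappa)\to(Y,\lambda)$ is $(\kappa,\lambda)$-continuous if it maps $\kappa$-connected subsets to $\lambda$-connected subsets; equivalently, whenever $x,x'$ are $\kappa$-adjacent, $f(x)$ and $f(x')$ are equal or $\lambda$-adjacent. "$\kappa$-continuous" means $(\kappa,\kappa)$-continuous. For a metric $d$ and nonempty finite $A,B$, the Hausdorff metric is $H_d(A,B)=\min\{\varepsilon\ge 0 : \forall a\in A\ \exists b'\in B,\ d(a,b')\le\varepsilon, \text{ and } \forall b\in B\ \exists a'\in A,\ d(a',b)\le \varepsilon\}$. Borsuk's metric of continuity $\delta_d(X,Y)$ is the greatest lower bound of the numbers $t>0$ such that there exist $\kappa$-continuous maps $f:X\to Y$ and $g:Y\to X$ with $d(x,f(x))\le t$ for all $x\in X$ and $d(y,g(y))\le t$ for all $y\in Y$. *)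

theory Defs
  imports "HOL-Analysis.Analysis"
begin

text \<open>Points of Z^n are modelled as int ^ 'n, 'n a finite index type of cardinality n.\<close>

definition is_adjacency :: "('a \<Rightarrow> 'a \<Rightarrow> bool) \<Rightarrow> bool" where
  "is_adjacency k \<longleftrightarrow> (\<forall>x y. k x y \<longrightarrow> k y x) \<and> (\<forall>x. \<not> k x x)"

definition is_metric_on :: "('a \<Rightarrow> 'a \<Rightarrow> real) \<Rightarrow> bool" where
  "is_metric_on d \<longleftrightarrow>
     (\<forall>x y. d x y \<ge> 0) \<and> (\<forall>x y. d x y = 0 \<longleftrightarrow> x = y) \<and>
     (\<forall>x y. d x y = d y x) \<and> (\<forall>x y z. d x z \<le> d x y + d y z)"

definition dconnected :: "('a \<Rightarrow> 'a \<Rightarrow> bool) \<Rightarrow> 'a set \<Rightarrow> bool" where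
  "dconnected k A \<longleftrightarrow> (\<forall>a\<in>A. \<forall>b\<in>A.
     (\<lambda>x y. x \<in> A \<and> y \<in> A \<and> k x y)\<^sup>*\<^sup>* a b)"

definition dcontinuous :: "('a \<Rightarrow> 'a \<Rightarrow> bool) \<Rightarrow> 'a set \<Rightarrow> ('b \<Rightarrow> 'b \<Rightarrow> bool) \<Rightarrow> 'b set
     \<Rightarrow> ('a \<Rightarrow> 'b) \<Rightarrow> bool" where
  "dcontinuous k X l Y f \<longleftrightarrow> f ` X \<subseteq> Y \<and>
     (\<forall>A. A \<subseteq> X \<longrightarrow> dconnected k A \<longrightarrow> dconnected l (f ` A))"

definition hausdorff_dist :: "('a \<Rightarrow> 'a \<Rightarrow> real) \<Rightarrow> 'a set \<Rightarrow> 'a set \<Rightarrow> real" where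
  "hausdorff_dist d A B = Inf {e. e \<ge> 0 \<and> (\<forall>a\<in>A. \<exists>b'\<in>B. d a b' \<le> e) \<and>
                                  (\<forall>b\<in>B. \<exists>a'\<in>A. d a' b \<le> e)}"

definition borsuk_delta :: "('a \<Rightarrow> 'a \<Rightarrow> real) \<Rightarrow> ('a \<Rightarrow> 'a \<Rightarrow> bool) \<Rightarrow> 'a set \<Rightarrow> 'a set \<Rightarrow> real" where
  "borsuk_delta d k X Y = Inf {t. t > 0 \<and> (\<exists>f g. dcontinuous k X k Y f \<and> dcontinuous k Y k X g \<and>
      (\<forall>x\<in>X. d x (f x) \<le> t) \<and> (\<forall>y\<in>Y. d y (g y) \<le> t))}"

end

theory Submission
  imports Defs
begin

text \<open>Every radius admissible for Borsuk's metric of continuity is admissible for the Hausdorff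
  metric: the maps f and g pick, for each point, a point of the other set within that radius.
  Constant maps are continuous and X, Y are finite, so some radius is admissible for Borsuk's
  metric (this matters: the infimum of the empty set of reals is an unspecified value); the
  infimum over the smaller set is therefore the larger one.\<close>

definition hausdorff_radii :: "('a \<Rightarrow> 'a \<Rightarrow> real) \<Rightarrow> 'a set \<Rightarrow> 'a set \<Rightarrow> real set" where
  "hausdorff_radii d A B = {e. e \<ge> 0 \<and> (\<forall>a\<in>A. \<exists>b'\<in>B. d a b' \<le> e) \<and>
                                  (\<forall>b\<in>B. \<exists>a'\<in>A. d a' b \<le> e)}"

definition borsuk_radii ::
    "('a \<Rightarrow> 'a \<Rightarrow> real) \<Rightarrow> ('a \<Rightarrow> 'a \<Rightarrow> bool) \<Rightarrow> 'a set \<Rightarrow> 'a set \<Rightarrow> real set" where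
  "borsuk_radii d k X Y = {t. t > 0 \<and> (\<exists>f g. dcontinuous k X k Y f \<and> dcontinuous k Y k X g \<and>
      (\<forall>x\<in>X. d x (f x) \<le> t) \<and> (\<forall>y\<in>Y. d y (g y) \<le> t))}"

lemma hausdorff_dist_eq_Inf_radii: "hausdorff_dist d A B = Inf (hausdorff_radii d A B)"
  unfolding hausdorff_dist_def hausdorff_radii_def ..

lemma borsuk_delta_eq_Inf_radii: "borsuk_delta d k X Y = Inf (borsuk_radii d k X Y)"
  unfolding borsuk_delta_def borsuk_radii_def ..

lemma bdd_below_hausdorff_radii: "bdd_below (hausdorff_radii d A B)"
  unfolding hausdorff_radii_def bdd_below_def by auto

lemma dcontinuous_const:
  assumes "y0 \<in> Y"
  shows "dcontinuous k X l Y (\<lambda>_. y0)"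
  using assms unfolding dcontinuous_def dconnected_def by (auto simp: image_constant_conv)

lemma borsuk_radii_subset_hausdorff_radii:
  assumes "\<And>x y. d x y = d y x"
  shows "borsuk_radii d k X Y \<subseteq> hausdorff_radii d X Y"
proof
  fix t assume "t \<in> borsuk_radii d k X Y"
  then obtain f g where "t > 0" and f: "dcontinuous k X k Y f" and g: "dcontinuous k Y k X g"
    and "\<forall>x\<in>X. d x (f x) \<le> t" and "\<forall>y\<in>Y. d y (g y) \<le> t"
    unfolding borsuk_radii_def by blast
  moreover have "f ` X \<subseteq> Y" and "g ` Y \<subseteq> X"
    using f g unfolding dcontinuous_def by auto
  ultimately show "t \<in> hausdorff_radii d X Y"
    unfolding hausdorff_radii_def using assms by force
qed

lemma borsuk_radii_nonempty:
  assumes "finite X" "X \<noteq> {}" "finite Y" "Y \<noteq> {}"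
  shows "borsuk_radii d k X Y \<noteq> {}"
proof -
  obtain x0 y0 where x0: "x0 \<in> X" and y0: "y0 \<in> Y" using assms(2,4) by blast
  have "bdd_above ((\<lambda>x. d x y0) ` X \<union> (\<lambda>y. d y x0) ` Y)"
    using assms(1,3) by (intro bdd_above_finite) simp
  then obtain M where M: "\<forall>x\<in>X. d x y0 \<le> M" "\<forall>y\<in>Y. d y x0 \<le> M"
    unfolding bdd_above_def by blast
  have "max 1 M \<in> borsuk_radii d k X Y"
    unfolding borsuk_radii_def
    using dcontinuous_const[OF y0] dcontinuous_const[OF x0] M by fastforce
  then show ?thesis by blast
qed

theorem proposition2p6:
  fixes X Y :: "(int ^ 'n) set"
    and k :: "int ^ 'n \<Rightarrow> int ^ 'n \<Rightarrow> bool"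
    and d :: "int ^ 'n \<Rightarrow> int ^ 'n \<Rightarrow> real"
  assumes "finite X" "X \<noteq> {}" "finite Y" "Y \<noteq> {}"
    and "is_adjacency k"
    and "is_metric_on d"
  shows "hausdorff_dist d X Y \<le> borsuk_delta d k X Y"
proof -
  have "\<And>x y. d x y = d y x"
    using \<open>is_metric_on d\<close> unfolding is_metric_on_def by blast
  then have "borsuk_radii d k X Y \<subseteq> hausdorff_radii d X Y"
    by (rule borsuk_radii_subset_hausdorff_radii)
  then show ?thesis
    unfolding hausdorff_dist_eq_Inf_radii borsuk_delta_eq_Inf_radii
    using borsuk_radii_nonempty[OF assms(1-4)] bdd_below_hausdorff_radii
    by (intro cInf_superset_mono)
qed

end
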